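(* The category $\mathsf{HSLat}$ of Heyting semilattices is not action accessible.
   Context: A Heyting semilattice is a meet-semilattice with top $1$ and an operation $\Rightarrow$ with $x\wedge y\le z$ iff $x\le y\Rightarrow z$; morphisms preserve $1,\wedge,\Rightarrow$; $\mathsf{HSLat}$ is semi-abelian. For an object $X$ of a semi-abelian category $\mathcal C$, $\mathsf{SpltExt}_{\mathcal C}(X)$ is the category of split extensions $X\xrightarrow{\kappa}A\rightleftarrows B$ (with $\alpha\colon A\to B$, $\beta\colon B\to A$, $\alpha\beta=1_B$, $\kappa=\ker\alpha$), whose morphisms are morphisms of extensions which are the identity on $X$ and commute with the sections. An object of a category is subterminal if every object admits at most one morphism into it; a category has enough subterminal objects if every object admits a morphism into a subterminal object. $\mathcal C$ is action accessible if for every object $X$, $\mathsf{SpltExt}_{\mathcal C}(X)$ has enough subterminal objects. *)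

theory Defs
  imports Main
begin

record 'a hsl =
  hcar  :: "'a set"
  htop  :: "'a"
  hmeet :: "'a \<Rightarrow> 'a \<Rightarrow> 'a"
  himp  :: "'a \<Rightarrow> 'a \<Rightarrow> 'a"

definition hle :: "'a hsl \<Rightarrow> 'a \<Rightarrow> 'a \<Rightarrow> bool" where
  "hle H x y \<longleftrightarrow> hmeet H x y = x"

definition heyting_semilattice :: "'a hsl \<Rightarrow> bool" where
  "heyting_semilattice H \<longleftrightarrow>
     htop H \<in> hcar H \<and>
     (\<forall>x\<in>hcar H. \<forall>y\<in>hcar H. hmeet H x y \<in> hcar H \<and> himp H x y \<in> hcar H) \<and>
     (\<forall>x\<in>hcar H. hmeet H x x = x) \<and>
     (\<forall>x\<in>hcar H. \<forall>y\<in>hcar H. hmeet H x y = hmeet H y x) \<and>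
     (\<forall>x\<in>hcar H. \<forall>y\<in>hcar H. \<forall>z\<in>hcar H. hmeet H (hmeet H x y) z = hmeet H x (hmeet H y z)) \<and>
     (\<forall>x\<in>hcar H. hle H x (htop H)) \<and>
     (\<forall>x\<in>hcar H. \<forall>y\<in>hcar H. \<forall>z\<in>hcar H.
        hle H (hmeet H x y) z \<longleftrightarrow> hle H x (himp H y z))"

definition hsl_hom :: "'a hsl \<Rightarrow> 'b hsl \<Rightarrow> ('a \<Rightarrow> 'b) \<Rightarrow> bool" where
  "hsl_hom H K f \<longleftrightarrow>
     (\<forall>x\<in>hcar H. f x \<in> hcar K) \<and>
     f (htop H) = htop K \<and>
     (\<forall>x\<in>hcar H. \<forall>y\<in>hcar H. f (hmeet H x y) = hmeet K (f x) (f y)) \<and>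
     (\<forall>x\<in>hcar H. \<forall>y\<in>hcar H. f (himp H x y) = himp K (f x) (f y))"

record ('x, 'a, 'b) splext =
  sA  :: "'a hsl"
  sB  :: "'b hsl"
  kap :: "'x \<Rightarrow> 'a"
  alp :: "'a \<Rightarrow> 'b"
  bet :: "'b \<Rightarrow> 'a"

text \<open>In HSLat, a morphism kap is a kernel of alp iff it is injective and its image is
  the preimage of the top element under alp.\<close>
definition is_splext :: "'x hsl \<Rightarrow> ('x, 'a, 'b) splext \<Rightarrow> bool" where
  "is_splext X E \<longleftrightarrow>
     heyting_semilattice X \<and> heyting_semilattice (sA E) \<and> heyting_semilattice (sB E) \<and>
     hsl_hom X (sA E) (kap E) \<and> hsl_hom (sA E) (sB E) (alp E) \<and> hsl_hom (sB E) (sA E) (bet E) \<and>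
     (\<forall>b\<in>hcar (sB E). alp E (bet E b) = b) \<and>
     inj_on (kap E) (hcar X) \<and>
     kap E ` hcar X = {a \<in> hcar (sA E). alp E a = htop (sB E)}"

definition splext_morph ::
  "'x hsl \<Rightarrow> ('x, 'a, 'b) splext \<Rightarrow> ('x, 'c, 'd) splext \<Rightarrow> ('a \<Rightarrow> 'c) \<Rightarrow> ('b \<Rightarrow> 'd) \<Rightarrow> bool" where
  "splext_morph X E E' f g \<longleftrightarrow>
     hsl_hom (sA E) (sA E') f \<and> hsl_hom (sB E) (sB E') g \<and>
     (\<forall>x\<in>hcar X. f (kap E x) = kap E' x) \<and>
     (\<forall>a\<in>hcar (sA E). alp E' (f a) = g (alp E a)) \<and>
     (\<forall>b\<in>hcar (sB E). f (bet E b) = bet E' (g b))"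

definition splext_morph_eq ::
  "('x, 'a, 'b) splext \<Rightarrow> ('a \<Rightarrow> 'c) \<Rightarrow> ('b \<Rightarrow> 'd) \<Rightarrow> ('a \<Rightarrow> 'c) \<Rightarrow> ('b \<Rightarrow> 'd) \<Rightarrow> bool" where
  "splext_morph_eq E f g f' g' \<longleftrightarrow>
     (\<forall>a\<in>hcar (sA E). f a = f' a) \<and> (\<forall>b\<in>hcar (sB E). g b = g' b)"

text \<open>Subterminality of E' in SpltExt(X), tested against all split extensions of X
  whose carriers live in the types 'e and 'f.\<close>
definition subterminal_splext ::
  "'e itself \<Rightarrow> 'f itself \<Rightarrow> 'x hsl \<Rightarrow> ('x, 'c, 'd) splext \<Rightarrow> bool" where
  "subterminal_splext _ _ X E' \<longleftrightarrow>
     (\<forall>(E :: ('x, 'e, 'f) splext) f g f' g'.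
        is_splext X E \<and> splext_morph X E E' f g \<and> splext_morph X E E' f' g'
        \<longrightarrow> splext_morph_eq E f g f' g')"

end

theory Submission
  imports Defs
begin

text \<open>Let X be the two-element chain and E4 the split extension X \<rightarrow> A4 \<rightleftharpoons> B4 of a
  four-element chain onto a three-element chain; E3 is its sub-extension X \<rightarrow> A3 \<rightleftharpoons> B3
  obtained by deleting the atoms. Morphisms of Heyting semilattices need not preserve the
  bottom, so besides the inclusion there is a second morphism E3 \<rightarrow> E4 sending the bottom
  to the atom. Given any morphism (f, g) from E4 to a split extension E', a Heyting morphism
  identifying y < x also sends x \<Rightarrow> y = y to the top; together with the injectivity of the
  kernel of E' this forces g to separate the bottom and the atom of B4. Hence the two
  composites E3 \<rightarrow> E' differ, E' is not subterminal, and E4 maps to no subterminal object.\<close>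

lemma hsl_top_meet:
  assumes "heyting_semilattice H" "x \<in> hcar H"
  shows "hmeet H (htop H) x = x"
  using assms unfolding heyting_semilattice_def hle_def by metis

lemma hsl_imp_self:
  assumes H: "heyting_semilattice H" and y: "y \<in> hcar H"
  shows "himp H y y = htop H"
proof -
  have top: "htop H \<in> hcar H" and yy: "himp H y y \<in> hcar H"
    using H y unfolding heyting_semilattice_def by auto
  have "hle H (hmeet H (htop H) y) y"
    using H y hsl_top_meet unfolding heyting_semilattice_def hle_def by metis
  then have "hle H (htop H) (himp H y y)"
    using H y top unfolding heyting_semilattice_def by blast
  then show ?thesis
    using hsl_top_meet[OF H yy] unfolding hle_def by simp
qed

lemma hsl_hom_comp:
  "hsl_hom H K h \<Longrightarrow> hsl_hom K L k \<Longrightarrow> hsl_hom H L (k \<circ> h)"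
  unfolding hsl_hom_def by auto

lemma hsl_hom_top_upward:
  assumes K: "heyting_semilattice K" and h: "hsl_hom H K h"
    and x: "x \<in> hcar H" and y: "y \<in> hcar H" and "hle H x y" and "h x = htop K"
  shows "h y = htop K"
proof -
  have "h x = hmeet K (h x) (h y)"
    using h x y \<open>hle H x y\<close> unfolding hsl_hom_def hle_def by metis
  also have "\<dots> = h y"
    using \<open>h x = htop K\<close> hsl_top_meet[OF K] h y unfolding hsl_hom_def by simp
  finally show ?thesis using \<open>h x = htop K\<close> by simp
qed

lemma hsl_hom_eq_imp_top:
  assumes "heyting_semilattice K" "hsl_hom H K h" "x \<in> hcar H" "y \<in> hcar H" "h x = h y"
  shows "h (himp H x y) = htop K"
  using assms hsl_imp_self unfolding hsl_hom_def by metis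

definition hsl_image :: "('a \<Rightarrow> 'b) \<Rightarrow> 'a hsl \<Rightarrow> 'b hsl" where
  "hsl_image e H =
     \<lparr>hcar = e ` hcar H, htop = e (htop H),
      hmeet = (\<lambda>x y. e (hmeet H (inv_into (hcar H) e x) (inv_into (hcar H) e y))),
      himp = (\<lambda>x y. e (himp H (inv_into (hcar H) e x) (inv_into (hcar H) e y)))\<rparr>"

lemma hcar_hsl_image [simp]: "hcar (hsl_image e H) = e ` hcar H"
  and htop_hsl_image [simp]: "htop (hsl_image e H) = e (htop H)"
  by (simp_all add: hsl_image_def)

lemma heyting_semilattice_hsl_image:
  assumes "heyting_semilattice H" "inj_on e (hcar H)"
  shows "heyting_semilattice (hsl_image e H)"
  using assms unfolding heyting_semilattice_def hsl_image_def hle_def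
  by (auto simp: inv_into_f_f inj_on_eq_iff)

lemma hsl_hom_hsl_image:
  assumes "heyting_semilattice H" "inj_on e (hcar H)"
  shows "hsl_hom H (hsl_image e H) e"
  using assms unfolding heyting_semilattice_def hsl_image_def hsl_hom_def
  by (auto simp: inv_into_f_f)

lemma hsl_hom_inv_into_hsl_image:
  assumes "heyting_semilattice H" "inj_on e (hcar H)"
  shows "hsl_hom (hsl_image e H) H (inv_into (hcar H) e)"
  using assms unfolding heyting_semilattice_def hsl_image_def hsl_hom_def
  by (auto simp: inv_into_f_f)

lemma splext_morph_comp:
  assumes "splext_morph X E1 E2 f g" "splext_morph X E2 E3 f' g'"
  shows "splext_morph X E1 E3 (f' \<circ> f) (g' \<circ> g)"
proof -
  have "f a \<in> hcar (sA E2)" if "a \<in> hcar (sA E1)" for a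
    using assms(1) that unfolding splext_morph_def hsl_hom_def by blast
  moreover have "g b \<in> hcar (sB E2)" if "b \<in> hcar (sB E1)" for b
    using assms(1) that unfolding splext_morph_def hsl_hom_def by blast
  moreover have "hsl_hom (sA E1) (sA E3) (f' \<circ> f)" "hsl_hom (sB E1) (sB E3) (g' \<circ> g)"
    using assms hsl_hom_comp unfolding splext_morph_def by blast+
  ultimately show ?thesis
    using assms unfolding splext_morph_def by simp
qed

definition splext_image ::
  "('a \<Rightarrow> 'c) \<Rightarrow> ('b \<Rightarrow> 'd) \<Rightarrow> ('x, 'a, 'b) splext \<Rightarrow> ('x, 'c, 'd) splext" where
  "splext_image eA eB E =
     \<lparr>sA = hsl_image eA (sA E), sB = hsl_image eB (sB E), kap = eA \<circ> kap E,
      alp = eB \<circ> alp E \<circ> inv_into (hcar (sA E)) eA,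
      bet = eA \<circ> bet E \<circ> inv_into (hcar (sB E)) eB\<rparr>"

lemma is_splext_splext_image:
  assumes E: "is_splext X E" and eA: "inj_on eA (hcar (sA E))" and eB: "inj_on eB (hcar (sB E))"
  shows "is_splext X (splext_image eA eB E)"
proof -
  have H: "heyting_semilattice (sA E)" "heyting_semilattice (sB E)"
    and k: "hsl_hom X (sA E) (kap E)" and a: "hsl_hom (sA E) (sB E) (alp E)"
    and b: "hsl_hom (sB E) (sA E) (bet E)"
    and sec: "\<forall>b\<in>hcar (sB E). alp E (bet E b) = b"
    and inj: "inj_on (kap E) (hcar X)"
    and ker: "kap E ` hcar X = {a \<in> hcar (sA E). alp E a = htop (sB E)}"
    using E unfolding is_splext_def by auto
  let ?dA = "inv_into (hcar (sA E)) eA" and ?dB = "inv_into (hcar (sB E)) eB"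
  have "inj_on (eA \<circ> kap E) (hcar X)"
    using inj eA k by (auto intro: comp_inj_on simp: hsl_hom_def inj_on_def)
  moreover have "\<forall>b\<in>eB ` hcar (sB E). eB (alp E (?dA (eA (bet E (?dB b))))) = b"
    using sec b unfolding hsl_hom_def by (auto simp: inv_into_f_f eA eB)
  moreover have "(eA \<circ> kap E) ` hcar X = {a \<in> eA ` hcar (sA E). eB (alp E (?dA a)) = eB (htop (sB E))}"
  proof -
    have "alp E a = htop (sB E) \<longleftrightarrow> eB (alp E a) = eB (htop (sB E))" if "a \<in> hcar (sA E)" for a
      using that a H(2) eB unfolding hsl_hom_def heyting_semilattice_def by (metis inj_on_eq_iff)
    then have "eA ` {a \<in> hcar (sA E). alp E a = htop (sB E)}
        = {a \<in> eA ` hcar (sA E). eB (alp E (?dA a)) = eB (htop (sB E))}"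
      by (auto simp: inv_into_f_f eA)
    then show ?thesis
      using ker by (metis image_comp)
  qed
  moreover have "hsl_hom X (hsl_image eA (sA E)) (eA \<circ> kap E)"
    using k hsl_hom_hsl_image[OF H(1) eA] by (rule hsl_hom_comp)
  moreover have "hsl_hom (hsl_image eA (sA E)) (hsl_image eB (sB E)) (eB \<circ> alp E \<circ> ?dA)"
    using hsl_hom_inv_into_hsl_image[OF H(1) eA] a hsl_hom_hsl_image[OF H(2) eB]
    by (metis hsl_hom_comp comp_assoc)
  moreover have "hsl_hom (hsl_image eB (sB E)) (hsl_image eA (sA E)) (eA \<circ> bet E \<circ> ?dB)"
    using hsl_hom_inv_into_hsl_image[OF H(2) eB] b hsl_hom_hsl_image[OF H(1) eA]
    by (metis hsl_hom_comp comp_assoc)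
  ultimately show ?thesis
    using E H eA eB unfolding is_splext_def splext_image_def
    by (simp add: heyting_semilattice_hsl_image)
qed

lemma splext_morph_splext_image_inv:
  assumes E: "is_splext X E" and eA: "inj_on eA (hcar (sA E))" and eB: "inj_on eB (hcar (sB E))"
  shows "splext_morph X (splext_image eA eB E) E
           (inv_into (hcar (sA E)) eA) (inv_into (hcar (sB E)) eB)"
proof -
  have H: "heyting_semilattice (sA E)" "heyting_semilattice (sB E)"
    and k: "hsl_hom X (sA E) (kap E)" and a: "hsl_hom (sA E) (sB E) (alp E)"
    and b: "hsl_hom (sB E) (sA E) (bet E)"
    using E unfolding is_splext_def by auto
  have "kap E x \<in> hcar (sA E)" if "x \<in> hcar X" for x
    using k that unfolding hsl_hom_def by blast
  moreover have "alp E a \<in> hcar (sB E)" if "a \<in> hcar (sA E)" for a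
    using a that unfolding hsl_hom_def by blast
  moreover have "bet E b \<in> hcar (sA E)" if "b \<in> hcar (sB E)" for b
    using b that unfolding hsl_hom_def by blast
  ultimately show ?thesis
    using hsl_hom_inv_into_hsl_image[OF H(1) eA] hsl_hom_inv_into_hsl_image[OF H(2) eB]
    unfolding splext_morph_def splext_image_def by (simp add: inv_into_f_f eA eB)
qed

lemma not_subterminal_splext_if_distinct_morphs:
  fixes eA :: "'a \<Rightarrow> 'e" and eB :: "'b \<Rightarrow> 'f" and E :: "('x, 'a, 'b) splext"
  assumes E: "is_splext X E"
    and m1: "splext_morph X E E' f1 g1" and m2: "splext_morph X E E' f2 g2"
    and ne: "\<not> splext_morph_eq E f1 g1 f2 g2"
    and eA: "inj_on eA (hcar (sA E))" and eB: "inj_on eB (hcar (sB E))"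
  shows "\<not> subterminal_splext TYPE('e) TYPE('f) X E'"
proof
  assume sub: "subterminal_splext TYPE('e) TYPE('f) X E'"
  let ?dA = "inv_into (hcar (sA E)) eA" and ?dB = "inv_into (hcar (sB E)) eB"
  have d: "splext_morph X (splext_image eA eB E) E ?dA ?dB"
    using E eA eB by (rule splext_morph_splext_image_inv)
  have "splext_morph_eq (splext_image eA eB E) (f1 \<circ> ?dA) (g1 \<circ> ?dB) (f2 \<circ> ?dA) (g2 \<circ> ?dB)"
    using sub is_splext_splext_image[OF E eA eB] splext_morph_comp[OF d m1] splext_morph_comp[OF d m2]
    unfolding subterminal_splext_def by (elim allE[where x = "splext_image eA eB E"]) blast
  then have "splext_morph_eq E f1 g1 f2 g2"
    unfolding splext_morph_eq_def splext_image_def by (simp add: inv_into_f_f eA eB)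
  with ne show False ..
qed

definition set_chain_hsl :: "'a set set \<Rightarrow> 'a set hsl" where
  "set_chain_hsl C =
     \<lparr>hcar = C, htop = \<Union>C, hmeet = (\<inter>), himp = (\<lambda>x y. if x \<subseteq> y then \<Union>C else y)\<rparr>"

lemma heyting_semilattice_set_chain_hsl:
  assumes "finite C" "C \<noteq> {}" "chain\<^sub>\<subseteq> C"
  shows "heyting_semilattice (set_chain_hsl C)"
proof -
  have "\<Union>C \<in> C"
    using assms Union_in_chain chain_subset_alt_def by blast
  moreover have "x \<inter> y \<in> C" if "x \<in> C" "y \<in> C" for x y
    using assms(3) that unfolding chain_subset_def by (metis inf.absorb1 inf.absorb2)
  moreover have "x \<inter> y \<subseteq> z \<longleftrightarrow> x \<subseteq> (if y \<subseteq> z then \<Union>C else z)"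
    if "x \<in> C" "y \<in> C" "z \<in> C" for x y z
  proof (cases "y \<subseteq> z")
    case False
    then have "z \<subseteq> y" "x \<subseteq> y \<or> y \<subseteq> x"
      using assms(3) that unfolding chain_subset_def by blast+
    with False show ?thesis by auto
  qed (use that in auto)
  ultimately show ?thesis
    unfolding heyting_semilattice_def set_chain_hsl_def hle_def
    by (simp add: Sup_upper flip: inf.absorb_iff1) (simp add: Int_ac)
qed

definition X2 :: "nat set hsl" where
  "X2 = set_chain_hsl {{0,1}, {0,1,2}}"

definition chain_splext :: "nat set set \<Rightarrow> nat set set \<Rightarrow> (nat set, nat set, nat set) splext" where
  "chain_splext C D =
     \<lparr>sA = set_chain_hsl C, sB = set_chain_hsl D, kap = id, alp = (\<lambda>a. a \<inter> {0,1}),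
      bet = (\<lambda>b. if b = {0,1} then {0,1,2} else b)\<rparr>"

definition E4 :: "(nat set, nat set, nat set) splext" where
  "E4 = chain_splext {{}, {0}, {0,1}, {0,1,2}} {{}, {0}, {0,1}}"

definition E3 :: "(nat set, nat set, nat set) splext" where
  "E3 = chain_splext {{}, {0,1}, {0,1,2}} {{}, {0,1}}"

lemma is_splext_E4: "is_splext X2 E4"
proof -
  have "heyting_semilattice X2" "heyting_semilattice (sA E4)" "heyting_semilattice (sB E4)"
    unfolding X2_def E4_def chain_splext_def
    by (simp_all add: heyting_semilattice_set_chain_hsl chain_subset_def)
  then show ?thesis
    unfolding is_splext_def hsl_hom_def
    by (simp add: X2_def E4_def chain_splext_def set_chain_hsl_def) auto
qed

lemma is_splext_E3: "is_splext X2 E3"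
proof -
  have "heyting_semilattice X2" "heyting_semilattice (sA E3)" "heyting_semilattice (sB E3)"
    unfolding X2_def E3_def chain_splext_def
    by (simp_all add: heyting_semilattice_set_chain_hsl chain_subset_def)
  then show ?thesis
    unfolding is_splext_def hsl_hom_def
    by (simp add: X2_def E3_def chain_splext_def set_chain_hsl_def) auto
qed

lemma splext_morph_E3_E4_id: "splext_morph X2 E3 E4 id id"
  unfolding splext_morph_def hsl_hom_def
  by (simp add: X2_def E3_def E4_def chain_splext_def set_chain_hsl_def) auto

definition lift_bot :: "nat set \<Rightarrow> nat set" where
  "lift_bot x = (if x = {} then {0} else x)"

lemma splext_morph_E3_E4_lift_bot: "splext_morph X2 E3 E4 lift_bot lift_bot"
  unfolding splext_morph_def hsl_hom_def
  by (simp add: X2_def E3_def E4_def chain_splext_def set_chain_hsl_def lift_bot_def) auto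

lemma splext_morph_from_E4_separates:
  assumes E': "is_splext X2 E'" and m: "splext_morph X2 E4 E' f g"
  shows "inj_on f (hcar (sA E3))" "inj_on g (hcar (sB E3))" "g {} \<noteq> g {0}"
proof -
  have A': "heyting_semilattice (sA E')" and B': "heyting_semilattice (sB E')"
    and kap_inj: "inj_on (kap E') (hcar X2)"
    using E' unfolding is_splext_def by auto
  have f: "hsl_hom (sA E4) (sA E') f" and g: "hsl_hom (sB E4) (sB E') g"
    and f_kap: "\<forall>x\<in>hcar X2. f x = kap E' x"
    and f_bet: "\<forall>b\<in>hcar (sB E4). f (bet E4 b) = bet E' (g b)"
    using m unfolding splext_morph_def by (auto simp: E4_def chain_splext_def)
  have A4: "hcar (sA E4) = {{}, {0}, {0,1}, {0,1,2}}" "htop (sA E4) = {0,1,2}"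
    and B4: "hcar (sB E4) = {{}, {0}, {0,1}}" "htop (sB E4) = {0,1}"
    by (auto simp: E4_def chain_splext_def set_chain_hsl_def)
  have f_top: "f {0,1,2} = htop (sA E')" and g_top: "g {0,1} = htop (sB E')"
    using f g A4(2) B4(2) unfolding hsl_hom_def by auto
  have fa_ne_top: "f {0,1} \<noteq> f {0,1,2}"
  proof -
    have in_X2: "{0,1} \<in> hcar X2" "{0,1,2} \<in> hcar X2"
      by (simp_all add: X2_def set_chain_hsl_def)
    have "({0,1} :: nat set) \<noteq> {0,1,2}" by (simp add: set_eq_iff exI[of _ 2])
    then show ?thesis
      using in_X2 f_kap inj_on_eq_iff[OF kap_inj in_X2] by simp
  qed
  have f0_ne_top: "f {} \<noteq> f {0,1,2}"
  proof
    assume "f {} = f {0,1,2}"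
    then have "f {0,1} = htop (sA E')"
      using hsl_hom_top_upward[OF A' f, of "{}" "{0,1}"] f_top A4(1)
      by (simp add: E4_def chain_splext_def set_chain_hsl_def hle_def)
    with fa_ne_top f_top show False by simp
  qed
  have f0_ne_a: "f {} \<noteq> f {0,1}"
  proof
    assume "f {} = f {0,1}"
    then have "f (himp (sA E4) {0,1} {}) = htop (sA E')"
      using hsl_hom_eq_imp_top[OF A' f, of "{0,1}" "{}"] A4(1) by simp
    with f0_ne_top f_top show False
      by (simp add: E4_def chain_splext_def set_chain_hsl_def)
  qed
  have "hcar (sA E3) = {{}, {0,1}, {0,1,2}}" "hcar (sB E3) = {{}, {0,1}}"
    by (simp_all add: E3_def chain_splext_def set_chain_hsl_def)
  show "inj_on f (hcar (sA E3))"
    using f0_ne_a f0_ne_top fa_ne_top unfolding \<open>hcar (sA E3) = _\<close> inj_on_def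
    by (intro ballI impI; elim insertE emptyE; metis)
  have g0_ne_top: "g {} \<noteq> g {0,1}"
  proof
    assume "g {} = g {0,1}"
    then have "f {} = f {0,1,2}"
      using f_bet B4(1) by (simp add: E4_def chain_splext_def)
    with f0_ne_top show False ..
  qed
  then show "inj_on g (hcar (sB E3))"
    unfolding \<open>hcar (sB E3) = _\<close> inj_on_def
    by (intro ballI impI; elim insertE emptyE; metis)
  show "g {} \<noteq> g {0}"
  proof
    assume "g {} = g {0}"
    then have "g (himp (sB E4) {0} {}) = htop (sB E')"
      using hsl_hom_eq_imp_top[OF B' g, of "{0}" "{}"] B4(1) by simp
    with g0_ne_top g_top show False
      by (simp add: E4_def chain_splext_def set_chain_hsl_def)
  qed
qed

text \<open>Subterminality is only tested against split extensions living in 'c \<times> 'c and 'd, so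
  E3 enters through its copy along the injections a \<mapsto> (f a, f a) and g.\<close>
lemma not_subterminal_splext_if_morph_from_E4:
  fixes E' :: "(nat set, 'c, 'd) splext"
  assumes E': "is_splext X2 E'" and m: "splext_morph X2 E4 E' f g"
  shows "\<not> subterminal_splext TYPE('c \<times> 'c) TYPE('d) X2 E'"
proof (rule not_subterminal_splext_if_distinct_morphs)
  show "is_splext X2 E3" by (rule is_splext_E3)
  show "splext_morph X2 E3 E' f g"
    using splext_morph_comp[OF splext_morph_E3_E4_id m] by simp
  show "splext_morph X2 E3 E' (f \<circ> lift_bot) (g \<circ> lift_bot)"
    using splext_morph_E3_E4_lift_bot m by (rule splext_morph_comp)
  have "{} \<in> hcar (sB E3)" by (simp add: E3_def chain_splext_def set_chain_hsl_def)
  then show "\<not> splext_morph_eq E3 f g (f \<circ> lift_bot) (g \<circ> lift_bot)"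
    using splext_morph_from_E4_separates(3)[OF E' m]
    unfolding splext_morph_eq_def by (auto simp: lift_bot_def)
  show "inj_on (\<lambda>a. (f a, f a)) (hcar (sA E3))"
    using splext_morph_from_E4_separates(1)[OF E' m] by (simp add: inj_on_def)
  show "inj_on g (hcar (sB E3))"
    using E' m by (rule splext_morph_from_E4_separates(2))
qed

theorem mainTheorem6:
  shows "\<exists>(X :: nat set hsl) (E :: (nat set, nat set, nat set) splext).
           is_splext X E \<and>
           (\<forall>(E' :: (nat set, 'c, 'd) splext) f g.
              is_splext X E' \<and> splext_morph X E E' f g
              \<longrightarrow> \<not> subterminal_splext TYPE('c \<times> 'c) TYPE('d) X E')"
  using is_splext_E4 not_subterminal_splext_if_morph_from_E4 by blast

end
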